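(* Let $G=(V,E)$ be a connected undirected graph on $n$ nodes with Laplacian $L$, let $\kappa_1,\dots,\kappa_n>0$, $D_\kappa=\mathrm{diag}(\kappa_1,\dots,\kappa_n)$, and for $S\subseteq V$ let $Q_S=L+D_\kappa D_S$, where $D_S$ is the diagonal $0/1$ matrix with $(D_S)_{ii}=1$ iff $i\in S$ (write $Q_v$ for $Q_{\{v\}}$). For nonempty $S$ let $H(S)=\frac12\mathrm{tr}(Q_S^{-1})$. Let $k\ge1$ be an integer, let $\hat H=\min\{H(S): S\subseteq V,\ S\neq\emptyset,\ |S|\le k\}$, and let $B=\max_{v\in V}\mathrm{tr}(Q_v^{-1})$. Let $S_g$ be the output of the following Greedy Algorithm: initialize $S=\{v\}$ where $v$ minimizes $\mathrm{tr}(Q_v^{-1})$ over $v\in V$; then for $i=2,\dots,k$: choose $v\in V\setminus S$ minimizing $\mathrm{tr}(Q_{S\cup\{v\}}^{-1})$; if $\mathrm{tr}(Q_{S\cup\{v\}}^{-1})<\mathrm{tr}(Q_S^{-1})$ set $S\leftarrow S\cup\{v\}$, otherwise stop and return $S$; after the loop return $S$. (Ties are broken arbitrarily.) Then: (1) if $|S_g|<k$, then $H(S_g)=\hat H$, i.e., $S_g$ is an optimal leader set; (2) if $|S_g|=k$, then $H(S_g)\le \left(1-\frac1e\right)\hat H+\frac{B}{e}$.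
   Context: For nonempty $S$, $Q_S$ is positive definite. $H(S)$ is the total steady-state variance of the leader–follower consensus dynamics $\dot x=-(L+D_\kappa D_S)x+w$ with white noise $w$, where $S$ is the set of leaders; the $k$-leader selection problem asks to minimize $H(S)$ subject to $|S|\le k$. *)

theory Defs
  imports "HOL-Analysis.Analysis"
begin

text \<open>Undirected simple graph on the finite vertex type 'n, given by an adjacency
relation E (assumed symmetric and irreflexive in the theorem).\<close>

definition graph_connected :: "('n \<Rightarrow> 'n \<Rightarrow> bool) \<Rightarrow> bool" where
  "graph_connected E \<longleftrightarrow> (\<forall>u v. (u, v) \<in> {(x, y). E x y}\<^sup>*)"

definition laplacian :: "('n::finite \<Rightarrow> 'n \<Rightarrow> bool) \<Rightarrow> real^'n^'n" where
  "laplacian E = (\<chi> i j. if i = j then real (card {w. E i w}) else if E i j then -1 else 0)"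

definition QS :: "('n::finite \<Rightarrow> 'n \<Rightarrow> bool) \<Rightarrow> ('n \<Rightarrow> real) \<Rightarrow> 'n set \<Rightarrow> real^'n^'n" where
  "QS E \<kappa> S = laplacian E + (\<chi> i j. if i = j \<and> i \<in> S then \<kappa> i else 0)"

definition trQinv :: "('n::finite \<Rightarrow> 'n \<Rightarrow> bool) \<Rightarrow> ('n \<Rightarrow> real) \<Rightarrow> 'n set \<Rightarrow> real" where
  "trQinv E \<kappa> S = trace (matrix_inv (QS E \<kappa> S))"

definition Hval :: "('n::finite \<Rightarrow> 'n \<Rightarrow> bool) \<Rightarrow> ('n \<Rightarrow> real) \<Rightarrow> 'n set \<Rightarrow> real" where
  "Hval E \<kappa> S = trQinv E \<kappa> S / 2"

definition Hhat :: "('n::finite \<Rightarrow> 'n \<Rightarrow> bool) \<Rightarrow> ('n \<Rightarrow> real) \<Rightarrow> nat \<Rightarrow> real" where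
  "Hhat E \<kappa> k = Min (Hval E \<kappa> ` {S. S \<noteq> {} \<and> card S \<le> k})"

definition Bval :: "('n::finite \<Rightarrow> 'n \<Rightarrow> bool) \<Rightarrow> ('n \<Rightarrow> real) \<Rightarrow> real" where
  "Bval E \<kappa> = Max ((\<lambda>v. trQinv E \<kappa> {v}) ` UNIV)"

text \<open>Possible outputs of the greedy algorithm (ties broken arbitrarily).
  vs lists the vertices in the order they were added; S_i = set (take i vs).
  The algorithm stops either after k vertices, or earlier (with fewer than k
  vertices) when the chosen minimizer (equivalently, every v \<notin> S, since all
  minimizers have the same value) fails to strictly decrease the trace.\<close>
definition greedy_output ::
  "('n::finite \<Rightarrow> 'n \<Rightarrow> bool) \<Rightarrow> ('n \<Rightarrow> real) \<Rightarrow> nat \<Rightarrow> 'n set \<Rightarrow> bool" where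
  "greedy_output E \<kappa> k Sg \<longleftrightarrow>
     (\<exists>vs. vs \<noteq> [] \<and> distinct vs \<and> length vs \<le> k \<and> Sg = set vs \<and>
        (\<forall>v. trQinv E \<kappa> {hd vs} \<le> trQinv E \<kappa> {v}) \<and>
        (\<forall>i. 1 \<le> i \<and> i < length vs \<longrightarrow>
            (\<forall>v. v \<notin> set (take i vs) \<longrightarrow>
                 trQinv E \<kappa> (set (take i vs) \<union> {vs ! i}) \<le> trQinv E \<kappa> (set (take i vs) \<union> {v})) \<and>
            trQinv E \<kappa> (set (take i vs) \<union> {vs ! i}) < trQinv E \<kappa> (set (take i vs))) \<and>
        (length vs < k \<longrightarrow>
            (\<forall>v. v \<notin> set vs \<longrightarrow> trQinv E \<kappa> (set vs) \<le> trQinv E \<kappa> (set vs \<union> {v}))))"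

end

theory Submission
  imports Defs
begin

(* Q_S is a nonsingular M-matrix: by a discrete minimum principle on the connected graph,
   Q_S x >= 0 forces x >= 0, so Q_S^{-1} exists and is entrywise nonnegative (and symmetric).
   Adding a leader u is a rank-one diagonal update, so by Sherman-Morrison the trace of the
   inverse drops by kappa_u |Q_S^{-1} e_u|^2 / (1 + kappa_u (Q_S^{-1})_uu) > 0; the
   nonnegativity of the updated inverses shows that this drop shrinks as S grows.  Hence
   S |-> tr Q_S^{-1} is strictly decreasing and supermodular on nonempty sets.  A greedy run
   can therefore stop early only at S = V, and otherwise the Nemhauser-Wolsey-Fisher argument
   shrinks the gap to an optimal k-set by 1 - 1/k per step, starting from a gap at most B.
   Only (1 - 1/k)^(k-1) <= 2/e is needed, since H is half the trace while B is not. *)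

lemma matrix_inv_eqI:
  fixes A B :: "real^'n^'n"
  assumes "A ** B = mat 1"
  shows "matrix_inv A = B"
proof -
  have "A ** matrix_inv A = mat 1 \<and> matrix_inv A ** A = mat 1"
    unfolding matrix_inv_def
    by (rule someI_ex) (use assms matrix_left_right_inverse in blast)
  then have "matrix_inv A = matrix_inv A ** (A ** B)" "matrix_inv A ** A = mat 1"
    using assms by simp_all
  then show ?thesis by (simp add: matrix_mul_assoc)
qed

lemma matrix_inv_add_diagonal_entry:
  fixes A B :: "real^'n^'n"
  assumes AB: "A ** B = mat 1" and d: "1 + c * B$u$u \<noteq> 0"
  shows "matrix_inv (A + (\<chi> i j. if i = u \<and> j = u then c else 0)) =
         (\<chi> i j. B$i$j - c * B$i$u * B$u$j / (1 + c * B$u$u))"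
proof (rule matrix_inv_eqI)
  define d where "d = 1 + c * B$u$u"
  have AB_entry: "(\<Sum>l\<in>UNIV. A$i$l * B$l$j) = (if i = j then 1 else 0)" for i j
    using AB by (simp add: vec_eq_iff matrix_matrix_mult_def mat_def)
  have "(\<Sum>l\<in>UNIV. (A$i$l + (if i = u \<and> l = u then c else 0)) * (B$l$j - c * B$l$u * B$u$j / d))
        = (if i = j then 1 else 0)" for i j
  proof -
    have "(\<Sum>l\<in>UNIV. (A$i$l + (if i = u \<and> l = u then c else 0)) * (B$l$j - c * B$l$u * B$u$j / d))
        = (\<Sum>l\<in>UNIV. A$i$l * B$l$j) - c * B$u$j / d * (\<Sum>l\<in>UNIV. A$i$l * B$l$u)
          + (if i = u then c * (B$u$j - c * B$u$u * B$u$j / d) else 0)"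
    proof -
      have "(A$i$l + (if i = u \<and> l = u then c else 0)) * (B$l$j - c * B$l$u * B$u$j / d)
          = A$i$l * B$l$j - c * B$u$j / d * (A$i$l * B$l$u)
            + (if l = u then (if i = u then c * (B$u$j - c * B$u$u * B$u$j / d) else 0) else 0)"
        for l by (auto simp: algebra_simps)
      then show ?thesis
        by (simp add: sum.distrib sum_subtractf sum_distrib_left)
    qed
    also have "\<dots> = (if i = j then 1 else 0)"
    proof -
      have "c * (B$u$j - c * B$u$u * B$u$j / d) = c * B$u$j / d"
        using d by (simp add: d_def field_simps)
      then show ?thesis by (simp add: AB_entry)
    qed
    finally show ?thesis .
  qed
  then show "(A + (\<chi> i j. if i = u \<and> j = u then c else 0)) **
      (\<chi> i j. B$i$j - c * B$i$u * B$u$j / (1 + c * B$u$u)) = mat 1"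
    by (simp add: vec_eq_iff matrix_matrix_mult_def mat_def d_def)
qed

(* Only nonempty sets are constrained: at S = {} the matrix Q_S = L is singular. *)
locale antitone_supermodular =
  fixes f :: "'a set \<Rightarrow> real"
  assumes antitone: "S \<noteq> {} \<Longrightarrow> S \<subseteq> T \<Longrightarrow> f T \<le> f S"
    and supermodular:
      "S \<noteq> {} \<Longrightarrow> f (insert v S) - f (insert u (insert v S)) \<le> f S - f (insert u S)"
begin

definition gain :: "'a set \<Rightarrow> 'a \<Rightarrow> real" where
  "gain S u = f S - f (insert u S)"

lemma gain_nonneg: "S \<noteq> {} \<Longrightarrow> 0 \<le> gain S u"
  unfolding gain_def using antitone[of S "insert u S"] by auto

lemma gain_union_le:
  assumes "finite A" and "S \<noteq> {}"
  shows "gain (S \<union> A) u \<le> gain S u"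
  using assms
proof (induction A rule: finite_induct)
  case empty
  then show ?case by simp
next
  case (insert w A)
  have "gain (insert w (S \<union> A)) u \<le> gain (S \<union> A) u"
    unfolding gain_def using supermodular[of "S \<union> A" w u] insert.prems by auto
  then show ?case using insert by simp
qed

lemma decrease_le_sum_gain:
  assumes "finite T" and "S \<noteq> {}"
  shows "f S - f (S \<union> T) \<le> (\<Sum>v\<in>T. gain S v)"
  using assms
proof (induction T rule: finite_induct)
  case empty
  then show ?case by simp
next
  case (insert w T)
  have "f S - f (S \<union> insert w T) = (f S - f (S \<union> T)) + gain (S \<union> T) w"
    unfolding gain_def by simp
  also have "\<dots> \<le> (\<Sum>v\<in>T. gain S v) + gain S w"
    using insert gain_union_le by (intro add_mono) auto
  finally show ?case using insert by (simp add: add.commute)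
qed

lemma gap_le_card_mult_max_gain:
  assumes S: "S \<noteq> {}" and max: "\<And>w. gain S w \<le> gain S v"
    and So: "So \<noteq> {}" "finite So"
  shows "f S - f So \<le> real (card So) * gain S v"
proof -
  have "f S - f So \<le> f S - f (S \<union> So)"
    using antitone[OF So(1), of "S \<union> So"] by auto
  also have "\<dots> \<le> (\<Sum>w\<in>So. gain S w)"
    by (rule decrease_le_sum_gain[OF So(2) S])
  also have "\<dots> \<le> real (card So) * gain S v"
    using sum_bounded_above[of So "gain S" "gain S v"] max by simp
  finally show ?thesis .
qed

lemma greedy_gap_bound:
  assumes greedy: "\<And>i w. 1 \<le> i \<Longrightarrow> i < length vs \<Longrightarrow> w \<notin> set (take i vs) \<Longrightarrow>
        f (set (take i vs) \<union> {vs ! i}) \<le> f (set (take i vs) \<union> {w})"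
    and vs: "vs \<noteq> []" and So: "So \<noteq> {}" "finite So" "card So \<le> k"
  shows "j < length vs \<Longrightarrow>
    f (set (take (Suc j) vs)) - f So \<le> (1 - 1 / real k) ^ j * (f {hd vs} - f So)"
proof (induction j)
  case 0
  then show ?case using vs by (cases vs) auto
next
  case (Suc j)
  define S where "S = set (take (Suc j) vs)"
  define v where "v = vs ! Suc j"
  have S: "S \<noteq> {}"
    using vs unfolding S_def by (cases vs) auto
  have step: "set (take (Suc (Suc j)) vs) = insert v S"
    using Suc.prems unfolding S_def v_def by (simp add: take_Suc_conv_app_nth insert_commute)
  have "gain S w \<le> gain S v" for w
  proof (cases "w \<in> S")
    case True
    then show ?thesis using gain_nonneg[OF S, of v] by (simp add: gain_def insert_absorb)
  next
    case False
    then show ?thesis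
      using greedy[of "Suc j" w] Suc.prems unfolding gain_def S_def v_def by simp
  qed
  then have "f S - f So \<le> real (card So) * gain S v"
    by (rule gap_le_card_mult_max_gain[OF S _ So(1,2)])
  also have "\<dots> \<le> real k * gain S v"
    using So(3) gain_nonneg[OF S, of v] by (intro mult_right_mono) auto
  finally have contraction: "f S - f So \<le> real k * (f S - f (insert v S))"
    unfolding gain_def .
  have k: "1 \<le> real k"
    using So card_gt_0_iff[of So] by linarith
  then have "f (insert v S) - f So \<le> (1 - 1 / real k) * (f S - f So)"
    using contraction by (simp add: field_simps)
  also have "\<dots> \<le> (1 - 1 / real k) * ((1 - 1 / real k) ^ j * (f {hd vs} - f So))"
    using Suc k unfolding S_def by (intro mult_left_mono) auto
  finally show ?case
    unfolding step by simp
qed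

end

lemma one_minus_inverse_power_le:
  assumes k: "2 \<le> k"
  shows "(1 - 1 / real k) ^ (k - 1) \<le> 2 / exp 1"
proof -
  have half: "1 / 2 \<le> 1 - 1 / real k"
    using k by (simp add: field_simps)
  have "1 / 2 * (1 - 1 / real k) ^ (k - 1) \<le> (1 - 1 / real k) * (1 - 1 / real k) ^ (k - 1)"
    using half by (intro mult_right_mono) auto
  also have "\<dots> = (1 - 1 / real k) ^ k"
    using k by (simp flip: power_Suc)
  also have "\<dots> \<le> exp (- 1)"
    using exp_ge_one_minus_x_over_n_power_n[of 1 k] k by simp
  finally show ?thesis
    by (simp add: exp_minus field_simps)
qed

(* The supermodularity estimate in Sherman-Morrison form: a and c are the columns u and v
   of Q_S^{-1}, and the entrywise bounds say that Q_{S+v}^{-1} and Q_{S+u}^{-1} are nonnegative. *)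
lemma corrected_gain_le:
  fixes a c :: "'i::finite \<Rightarrow> real"
  assumes \<kappa>: "0 \<le> \<kappa>" and A: "0 < A" and A': "0 < A - \<kappa> * t * r" and t: "0 \<le> t"
    and a_ge: "\<And>i. t * c i \<le> a i" and c_ge: "\<And>i. \<kappa> * r / A * a i \<le> c i"
    and c0: "\<And>i. 0 \<le> c i"
  shows "\<kappa> * (\<Sum>i\<in>UNIV. (a i - t * c i)\<^sup>2) / (A - \<kappa> * t * r) \<le> \<kappa> * (\<Sum>i\<in>UNIV. (a i)\<^sup>2) / A"
proof -
  define x where "x = (\<Sum>i\<in>UNIV. (a i)\<^sup>2)"
  define y where "y = (\<Sum>i\<in>UNIV. (c i)\<^sup>2)"
  define z where "z = (\<Sum>i\<in>UNIV. a i * c i)"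
  have a0: "0 \<le> a i" for i
    using a_ge[of i] c0[of i] t by (meson mult_nonneg_nonneg order_trans)
  have z_ge_y: "t * y \<le> z"
    unfolding y_def z_def sum_distrib_left power2_eq_square
    by (rule sum_mono) (simp add: mult.assoc[symmetric] mult_right_mono[OF a_ge c0])
  have z_ge_x: "\<kappa> * r / A * x \<le> z"
    unfolding x_def z_def sum_distrib_left power2_eq_square
    by (rule sum_mono) (metis mult.assoc mult.commute mult_left_mono[OF c_ge a0])
  have expand: "(\<Sum>i\<in>UNIV. (a i - t * c i)\<^sup>2) = x - 2 * t * z + t\<^sup>2 * y"
    unfolding x_def y_def z_def
    by (simp add: power2_eq_square algebra_simps sum.distrib sum_subtractf sum_distrib_left)
  have "(x - 2 * t * z + t\<^sup>2 * y) * A - x * (A - \<kappa> * t * r)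
      = t * (\<kappa> * r * x - z * A) + t * A * (t * y - z)"
    by (simp add: algebra_simps power2_eq_square)
  also have "\<dots> \<le> 0"
  proof -
    have "\<kappa> * r * x \<le> z * A"
      using z_ge_x A by (simp add: field_simps)
    then show ?thesis
      using z_ge_y A t by (intro add_nonpos_nonpos mult_nonneg_nonpos) auto
  qed
  finally have "(x - 2 * t * z + t\<^sup>2 * y) / (A - \<kappa> * t * r) \<le> x / A"
    using A A' by (simp add: divide_le_eq le_divide_eq mult.commute)
  then show ?thesis
    unfolding expand x_def[symmetric] times_divide_eq_right[symmetric]
    using \<kappa> by (rule mult_left_mono)
qed

locale leader_follower =
  fixes E :: "'n::finite \<Rightarrow> 'n \<Rightarrow> bool" and \<kappa> :: "'n \<Rightarrow> real"
  assumes sym: "\<And>u v. E u v \<Longrightarrow> E v u"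
    and irrefl: "\<And>v. \<not> E v v"
    and conn: "graph_connected E"
    and kpos: "\<And>i. 0 < \<kappa> i"
begin

abbreviation Q :: "'n set \<Rightarrow> real^'n^'n" where
  "Q S \<equiv> QS E \<kappa> S"

abbreviation P :: "'n set \<Rightarrow> real^'n^'n" where
  "P S \<equiv> matrix_inv (Q S)"

abbreviation tr :: "'n set \<Rightarrow> real" where
  "tr S \<equiv> trQinv E \<kappa> S"

lemma QS_entry:
  "Q S $ i $ j = (if i = j then real (card {w. E i w}) + (if i \<in> S then \<kappa> i else 0)
     else if E i j then -1 else 0)"
  unfolding QS_def laplacian_def using irrefl by auto

lemma QS_mult_vec:
  "(Q S *v x) $ i = (\<Sum>j\<in>{w. E i w}. x$i - x$j) + (if i \<in> S then \<kappa> i * x$i else 0)"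
proof -
  have "(Q S *v x) $ i = (\<Sum>j\<in>UNIV. (if j = i then (real (card {w. E i w})
      + (if i \<in> S then \<kappa> i else 0)) * x$i else 0) + (if E i j then - x$j else 0))"
    unfolding matrix_vector_mult_def by (auto simp: QS_entry irrefl intro: sum.cong)
  also have "\<dots> = (real (card {w. E i w}) + (if i \<in> S then \<kappa> i else 0)) * x$i
      + (\<Sum>j\<in>{w. E i w}. - x$j)"
    by (simp add: sum.distrib sum.If_cases)
  finally show ?thesis
    by (simp add: sum_subtractf sum_negf algebra_simps)
qed

lemma QS_minimum_principle:
  assumes S: "S \<noteq> {}" and nonneg: "\<And>i. 0 \<le> (Q S *v x) $ i"
  shows "0 \<le> x $ i"
proof (rule ccontr)
  assume neg: "\<not> 0 \<le> x $ i"
  define m where "m = Min (range (\<lambda>i. x$i))"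
  have m_le: "m \<le> x$j" for j
    unfolding m_def by (rule Min_le) auto
  have "m \<in> range (\<lambda>i. x$i)"
    unfolding m_def by (rule Min_in) auto
  then obtain i0 where i0: "x$i0 = m"
    by auto
  have m_neg: "m < 0"
    using m_le[of i] neg by linarith
  define M where "M = {i. x$i = m}"
  have M_closed: "(\<forall>j. E i j \<longrightarrow> j \<in> M) \<and> i \<notin> S" if "i \<in> M" for i
  proof -
    have xi: "x$i = m"
      using that M_def by auto
    have "(\<Sum>j\<in>{w. E i w}. x$i - x$j) \<le> 0"
      by (rule sum_nonpos) (use xi m_le in auto)
    moreover have "(if i \<in> S then \<kappa> i * x$i else 0) \<le> 0"
      using xi m_neg kpos[of i] by (simp add: mult_pos_neg less_imp_le)
    moreover have "0 \<le> (\<Sum>j\<in>{w. E i w}. x$i - x$j) + (if i \<in> S then \<kappa> i * x$i else 0)"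
      using nonneg[of i] by (simp add: QS_mult_vec)
    ultimately have "(\<Sum>j\<in>{w. E i w}. x$j - x$i) = 0"
      and "(if i \<in> S then \<kappa> i * x$i else 0) = 0"
      by (simp_all add: sum_subtractf)
    then show ?thesis
      using sum_nonneg_eq_0_iff[of "{w. E i w}" "\<lambda>j. x$j - x$i"] xi m_le m_neg kpos[of i]
      by (auto simp: M_def split: if_splits)
  qed
  have "v \<in> M" for v
  proof -
    have "(i0, v) \<in> {(x, y). E x y}\<^sup>*"
      using conn unfolding graph_connected_def by blast
    then show ?thesis
      by (induction rule: rtrancl_induct) (use i0 M_def M_closed in auto)
  qed
  then show False
    using S M_closed by auto
qed

lemma QS_mult_inverse:
  assumes S: "S \<noteq> {}"
  shows "Q S ** P S = mat 1"
proof -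
  have "x = 0" if "Q S *v x = 0" for x
  proof -
    have "0 \<le> x$i" for i
      by (rule QS_minimum_principle[OF S]) (simp add: that)
    moreover have "0 \<le> (-x)$i" for i
      by (rule QS_minimum_principle[OF S])
        (use that in \<open>simp add: matrix_vector_mult_def sum_negf vec_eq_iff\<close>)
    ultimately show ?thesis
      by (auto simp: vec_eq_iff intro: antisym)
  qed
  then obtain B where "B ** Q S = mat 1"
    using matrix_left_invertible_ker by blast
  then have "Q S ** B = mat 1"
    using matrix_left_right_inverse by blast
  moreover from this have "P S = B"
    by (rule matrix_inv_eqI)
  ultimately show ?thesis by simp
qed

lemma QS_mult_inverse_entry:
  "S \<noteq> {} \<Longrightarrow> (\<Sum>l\<in>UNIV. Q S $ i $ l * P S $ l $ j) = (if i = j then 1 else 0)"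
  using QS_mult_inverse[of S] by (simp add: vec_eq_iff matrix_matrix_mult_def mat_def)

lemma QS_inverse_nonneg:
  assumes S: "S \<noteq> {}"
  shows "0 \<le> P S $ i $ j"
proof -
  have "0 \<le> (Q S *v (\<chi> i. P S $ i $ j)) $ l" for l
    using QS_mult_inverse_entry[OF S, of l j] by (simp add: matrix_vector_mult_def)
  from QS_minimum_principle[OF S this] show ?thesis by simp
qed

lemma QS_inverse_symmetric:
  assumes S: "S \<noteq> {}"
  shows "P S $ i $ j = P S $ j $ i"
proof -
  have "transpose (Q S) = Q S"
    by (auto simp: vec_eq_iff transpose_def QS_entry dest: sym)
  then have "transpose (P S) ** Q S = mat 1"
    using arg_cong[OF QS_mult_inverse[OF S], of transpose] by (simp add: matrix_transpose_mul)
  then have "Q S ** transpose (P S) = mat 1"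
    using matrix_left_right_inverse by blast
  then have "P S = transpose (P S)"
    by (rule matrix_inv_eqI)
  then show ?thesis
    by (metis transpose_def vec_lambda_beta)
qed

lemma one_plus_kappa_QS_inverse_pos: "S \<noteq> {} \<Longrightarrow> 0 < 1 + \<kappa> u * P S $ u $ u"
  using QS_inverse_nonneg[of S u u] kpos[of u] by (simp add: add_pos_nonneg)

lemma QS_inverse_insert:
  assumes S: "S \<noteq> {}" and u: "u \<notin> S"
  shows "P (insert u S) $ i $ j
    = P S $ i $ j - \<kappa> u * P S $ i $ u * P S $ u $ j / (1 + \<kappa> u * P S $ u $ u)"
proof -
  have "Q (insert u S) = Q S + (\<chi> i j. if i = u \<and> j = u then \<kappa> u else 0)"
    using u by (auto simp: vec_eq_iff QS_entry)
  moreover have "1 + \<kappa> u * P S $ u $ u \<noteq> 0"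
    using one_plus_kappa_QS_inverse_pos[OF S, of u] by simp
  ultimately show ?thesis
    by (simp add: matrix_inv_add_diagonal_entry[OF QS_mult_inverse[OF S]])
qed

lemma trQinv_insert:
  assumes S: "S \<noteq> {}" and u: "u \<notin> S"
  shows "tr S - tr (insert u S) = \<kappa> u * (\<Sum>i\<in>UNIV. (P S $ i $ u)\<^sup>2) / (1 + \<kappa> u * P S $ u $ u)"
proof -
  have "P (insert u S) $ i $ i
      = P S $ i $ i - \<kappa> u / (1 + \<kappa> u * P S $ u $ u) * (P S $ i $ u)\<^sup>2" for i
    using QS_inverse_symmetric[OF S, of u i]
    by (simp add: QS_inverse_insert[OF S u] power2_eq_square)
  then show ?thesis
    unfolding trQinv_def trace_def
    by (simp add: sum_subtractf sum_distrib_left sum_divide_distrib)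
qed

lemma trQinv_nonneg: "S \<noteq> {} \<Longrightarrow> 0 \<le> tr S"
  unfolding trQinv_def trace_def by (rule sum_nonneg) (rule QS_inverse_nonneg)

lemma trQinv_insert_less:
  assumes S: "S \<noteq> {}" and u: "u \<notin> S"
  shows "tr (insert u S) < tr S"
proof -
  obtain l where "P S $ l $ u \<noteq> 0"
    using QS_mult_inverse_entry[OF S, of u u] by force
  then have "0 < (\<Sum>i\<in>UNIV. (P S $ i $ u)\<^sup>2)"
    by (intro sum_pos2[of _ l]) auto
  then have "0 < \<kappa> u * (\<Sum>i\<in>UNIV. (P S $ i $ u)\<^sup>2) / (1 + \<kappa> u * P S $ u $ u)"
    using one_plus_kappa_QS_inverse_pos[OF S, of u] kpos[of u] by simp
  then show ?thesis
    using trQinv_insert[OF S u] by linarith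
qed

lemma trQinv_antitone:
  assumes S: "S \<noteq> {}" and ST: "S \<subseteq> T"
  shows "tr T \<le> tr S"
proof -
  have "tr (S \<union> A) \<le> tr S" if "finite A" for A
    using that
  proof (induction A rule: finite_induct)
    case empty
    then show ?case by simp
  next
    case (insert a A)
    show ?case
    proof (cases "a \<in> S \<union> A")
      case True
      then show ?thesis using insert.IH by (simp add: insert_absorb)
    next
      case False
      then have "tr (insert a (S \<union> A)) < tr (S \<union> A)"
        using S by (intro trQinv_insert_less) auto
      then show ?thesis using insert.IH by simp
    qed
  qed
  from this[of T] show ?thesis
    using ST by (simp add: Un_absorb1)
qed

lemma trQinv_gain_insert_le:
  assumes S: "S \<noteq> {}" and u: "u \<notin> S" and v: "v \<notin> S" and uv: "u \<noteq> v"
  shows "tr (insert v S) - tr (insert u (insert v S)) \<le> tr S - tr (insert u S)"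
proof -
  define p where "p = P S"
  define A where "A = 1 + \<kappa> u * p$u$u"
  define r where "r = p$u$v"
  define t where "t = \<kappa> v * r / (1 + \<kappa> v * p$v$v)"
  have Sv: "insert v S \<noteq> {}" and Su: "insert u S \<noteq> {}" and u_Sv: "u \<notin> insert v S"
    using u uv by auto
  have p_nonneg: "0 \<le> p$i$j" for i j
    unfolding p_def by (rule QS_inverse_nonneg[OF S])
  have col_v: "P (insert v S) $ i $ u = p$i$u - t * p$i$v" for i
    using QS_inverse_insert[OF S v, of i u] QS_inverse_symmetric[OF S, of v u]
    unfolding p_def t_def r_def by simp
  have col_u: "P (insert u S) $ i $ v = p$i$v - \<kappa> u * r / A * p$i$u" for i
    using QS_inverse_insert[OF S u, of i v] unfolding p_def A_def r_def by simp
  have "P (insert v S) $ u $ u = p$u$u - t * r"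
    using col_v[of u] QS_inverse_symmetric[OF S, of u v] unfolding r_def p_def by simp
  then have diag: "1 + \<kappa> u * P (insert v S) $ u $ u = A - \<kappa> u * t * r"
    unfolding A_def by (simp add: right_diff_distrib mult.assoc)
  have "tr (insert v S) - tr (insert u (insert v S))
      = \<kappa> u * (\<Sum>i\<in>UNIV. (p$i$u - t * p$i$v)\<^sup>2) / (A - \<kappa> u * t * r)"
    using trQinv_insert[OF Sv u_Sv] unfolding diag by (simp add: col_v)
  also have "\<dots> \<le> \<kappa> u * (\<Sum>i\<in>UNIV. (p$i$u)\<^sup>2) / A"
  proof (rule corrected_gain_le[where a = "\<lambda>i. p$i$u" and c = "\<lambda>i. p$i$v"])
    show "0 \<le> \<kappa> u"
      using kpos[of u] by simp
    show "0 < A"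
      unfolding A_def p_def by (rule one_plus_kappa_QS_inverse_pos[OF S])
    show "0 < A - \<kappa> u * t * r"
      using one_plus_kappa_QS_inverse_pos[OF Sv, of u] diag by simp
    show "0 \<le> t"
      unfolding t_def r_def using p_nonneg kpos[of v] one_plus_kappa_QS_inverse_pos[OF S, of v]
      by (simp add: p_def)
    show "t * p$i$v \<le> p$i$u" for i
      using QS_inverse_nonneg[OF Sv, of i u] col_v[of i] by simp
    show "\<kappa> u * r / A * p$i$u \<le> p$i$v" for i
      using QS_inverse_nonneg[OF Su, of i v] col_u[of i] by simp
    show "0 \<le> p$i$v" for i
      by (rule p_nonneg)
  qed
  also have "\<dots> = tr S - tr (insert u S)"
    using trQinv_insert[OF S u] unfolding A_def p_def by simp
  finally show ?thesis .
qed

sublocale antitone_supermodular tr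
proof
  show "tr T \<le> tr S" if "S \<noteq> {}" "S \<subseteq> T" for S T
    using trQinv_antitone that .
  show "tr (insert v S) - tr (insert u (insert v S)) \<le> tr S - tr (insert u S)"
    if S: "S \<noteq> {}" for S u v
  proof (cases "v \<in> S \<or> u \<in> insert v S")
    case True
    moreover have "tr (insert u S) \<le> tr S"
      using trQinv_antitone[OF S] by blast
    ultimately show ?thesis
      by (auto simp: insert_absorb)
  next
    case False
    then show ?thesis
      using trQinv_gain_insert_le[OF S] by auto
  qed
qed

lemma greedy_output_stops_early:
  assumes greedy: "greedy_output E \<kappa> k Sg" and short: "card Sg < k"
  shows "Sg = UNIV"
proof (rule ccontr)
  obtain vs where vs: "vs \<noteq> []" "distinct vs" "Sg = set vs"
    and stop: "length vs < k \<longrightarrow> (\<forall>v. v \<notin> set vs \<longrightarrow> tr (set vs) \<le> tr (set vs \<union> {v}))"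
    using greedy unfolding greedy_output_def by blast
  assume "Sg \<noteq> UNIV"
  then obtain v where v: "v \<notin> set vs"
    using vs by auto
  have "tr (set vs) \<le> tr (insert v (set vs))"
    using stop short v vs by (simp add: distinct_card)
  moreover have "tr (insert v (set vs)) < tr (set vs)"
    using vs v by (intro trQinv_insert_less) auto
  ultimately show False by simp
qed

lemma greedy_output_approximation:
  assumes greedy: "greedy_output E \<kappa> k Sg" and full: "card Sg = k"
    and So: "So \<noteq> {}" "card So \<le> k"
  shows "tr Sg - tr So \<le> 2 / exp 1 * (Bval E \<kappa> - tr So)"
proof -
  obtain vs where vs: "vs \<noteq> []" "distinct vs" "Sg = set vs"
    and first: "\<forall>v. tr {hd vs} \<le> tr {v}"
    and steps: "\<forall>i. 1 \<le> i \<and> i < length vs \<longrightarrow>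
        (\<forall>v. v \<notin> set (take i vs) \<longrightarrow>
           tr (set (take i vs) \<union> {vs ! i}) \<le> tr (set (take i vs) \<union> {v})) \<and>
        tr (set (take i vs) \<union> {vs ! i}) < tr (set (take i vs))"
    using greedy unfolding greedy_output_def by blast
  have len: "length vs = k"
    using full vs by (simp add: distinct_card)
  have B: "tr {v} \<le> Bval E \<kappa>" for v
    unfolding Bval_def by (rule Max_ge) auto
  obtain w where w: "w \<in> So"
    using So by auto
  have So_le_B: "tr So \<le> Bval E \<kappa>"
    using trQinv_antitone[of "{w}" So] B[of w] w by simp
  have "k \<noteq> 0"
    using len vs by auto
  then consider "k = 1" | "2 \<le> k"
    by linarith
  then show ?thesis
  proof cases
    case 1
    then have "So = {w}" and "Sg = {hd vs}"
      using So w len vs by (auto simp: card_le_Suc0_iff_eq length_Suc_conv)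
    then have "tr Sg - tr So \<le> 0"
      using first by simp
    also have "0 \<le> 2 / exp 1 * (Bval E \<kappa> - tr So)"
      using So_le_B by simp
    finally show ?thesis .
  next
    case 2
    have "tr Sg - tr So \<le> (1 - 1 / real k) ^ (k - 1) * (tr {hd vs} - tr So)"
      using greedy_gap_bound[of vs So k "k - 1"] steps vs So len 2 by simp
    also have "\<dots> \<le> (1 - 1 / real k) ^ (k - 1) * (Bval E \<kappa> - tr So)"
      using B[of "hd vs"] 2 by (intro mult_left_mono) auto
    also have "\<dots> \<le> 2 / exp 1 * (Bval E \<kappa> - tr So)"
      using So_le_B by (intro mult_right_mono[OF one_minus_inverse_power_le[OF 2]]) simp
    finally show ?thesis .
  qed
qed

lemma greedy_output_Hval_le:
  assumes "greedy_output E \<kappa> k Sg" and "card Sg = k" and So: "So \<noteq> {}" "card So \<le> k"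
  shows "Hval E \<kappa> Sg \<le> (1 - 1 / exp 1) * Hval E \<kappa> So + Bval E \<kappa> / exp 1"
proof -
  define b where "b = Bval E \<kappa> / exp 1"
  define s where "s = tr So / exp 1"
  have "tr Sg - tr So \<le> 2 * b - 2 * s"
    using greedy_output_approximation[OF assms] unfolding b_def s_def by (simp add: field_simps)
  moreover have "0 \<le> s"
    using trQinv_nonneg[OF So(1)] unfolding s_def by simp
  moreover have "(1 - 1 / exp 1) * Hval E \<kappa> So + Bval E \<kappa> / exp 1 = tr So / 2 - s / 2 + b"
    unfolding b_def s_def Hval_def by (simp add: field_simps)
  ultimately show ?thesis
    unfolding Hval_def by linarith
qed

end

lemma Hhat_le:
  "S \<noteq> {} \<Longrightarrow> card S \<le> k \<Longrightarrow> Hhat E \<kappa> k \<le> Hval E \<kappa> S"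
  unfolding Hhat_def by (intro Min_le) auto

lemma Hhat_attained:
  fixes E :: "'n::finite \<Rightarrow> 'n \<Rightarrow> bool"
  assumes "1 \<le> k"
  obtains So where "So \<noteq> {}" "card So \<le> k" "Hval E \<kappa> So = Hhat E \<kappa> k"
proof -
  have "{undefined} \<in> {S :: 'n set. S \<noteq> {} \<and> card S \<le> k}"
    using assms by simp
  then have "Hhat E \<kappa> k \<in> Hval E \<kappa> ` {S. S \<noteq> {} \<and> card S \<le> k}"
    unfolding Hhat_def by (intro Min_in) auto
  then obtain So where "So \<noteq> {}" "card So \<le> k" "Hhat E \<kappa> k = Hval E \<kappa> So"
    by auto
  then show ?thesis
    using that by simp
qed

theorem theorem3:
  fixes E :: "'n::finite \<Rightarrow> 'n \<Rightarrow> bool" and \<kappa> :: "'n \<Rightarrow> real"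
    and k :: nat and Sg :: "'n set"
  assumes sym: "\<And>u v. E u v \<Longrightarrow> E v u"
    and irrefl: "\<And>v. \<not> E v v"
    and conn: "graph_connected E"
    and kpos: "\<And>i. \<kappa> i > 0"
    and k1: "k \<ge> 1"
    and greedy: "greedy_output E \<kappa> k Sg"
  shows "(card Sg < k \<longrightarrow> Hval E \<kappa> Sg = Hhat E \<kappa> k) \<and>
         (card Sg = k \<longrightarrow>
            Hval E \<kappa> Sg \<le> (1 - 1 / exp 1) * Hhat E \<kappa> k + Bval E \<kappa> / exp 1)"
proof -
  interpret leader_follower E \<kappa>
    using sym irrefl conn kpos by unfold_locales
  obtain So where So: "So \<noteq> {}" "card So \<le> k" and opt: "Hval E \<kappa> So = Hhat E \<kappa> k"
    using Hhat_attained[OF k1] by blast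
  have "Hval E \<kappa> Sg = Hhat E \<kappa> k" if short: "card Sg < k"
  proof -
    have "Sg = UNIV"
      using greedy_output_stops_early[OF greedy short] .
    then have "Hval E \<kappa> Sg \<le> Hval E \<kappa> So"
      unfolding Hval_def using trQinv_antitone[OF So(1)] by simp
    moreover have "Hhat E \<kappa> k \<le> Hval E \<kappa> Sg"
      using Hhat_le[of Sg k] short \<open>Sg = UNIV\<close> by simp
    ultimately show ?thesis
      using opt by simp
  qed
  moreover have "Hval E \<kappa> Sg \<le> (1 - 1 / exp 1) * Hhat E \<kappa> k + Bval E \<kappa> / exp 1"
    if "card Sg = k"
    using greedy_output_Hval_le[OF greedy that So] opt by simp
  ultimately show ?thesis
    by blast
qed

end
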